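(* Let $K$ be a field of characteristic $0$, $e\ge2$, and $A=[a_{i,j}]$, $B=[b_{i,j}]\in M_e(K)$, with indices taken in $\mathbb{Z}/e\mathbb{Z}$; write $A[i,j]=a_{i,j}$. For $d\in(\mathbb{Z}/e\mathbb{Z})^\times$, \[ (B\overset{d}{\ast}A)[i,j]=(A\overset{d^{-1}}{\ast}B)[-d^{-1}i,-d^{-1}j]\quad\text{for all } i,j. \] In particular $A\overset{-1}{\ast}B=B\overset{-1}{\ast}A$.
   Context: For $A=[a_{i,j}],B=[b_{i,j}]\in M_e(K)$ (indices modulo $e$) and $d\in(\mathbb{Z}/e\mathbb{Z})\setminus\{0\}$, the $d$-composition is $A\overset{d}{\ast}B=\big[\sum_{s=0}^{e-1}\sum_{t=0}^{e-1}a_{s,t}b_{ds+i,dt+j}\big]_{0\le i,j\le e-1}$. *)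

theory Defs
  imports "Jordan_Normal_Form.Matrix" "HOL-Number_Theory.Cong"
begin

text \<open>Indices of e x e matrices are 0..e-1, read modulo e. The residue of an
integer k modulo e, as a matrix index.\<close>
definition idx :: "nat \<Rightarrow> int \<Rightarrow> nat" where
  "idx e k = nat (k mod int e)"

definition dcomp :: "nat \<Rightarrow> int \<Rightarrow> 'a::comm_ring_1 mat \<Rightarrow> 'a mat \<Rightarrow> 'a mat" where
  "dcomp e d A B = mat e e (\<lambda>(i,j).
     (\<Sum>s<e. \<Sum>t<e. A $$ (s,t) *
        B $$ (idx e (d * int s + int i), idx e (d * int t + int j))))"

end

theory Submission
  imports Defs
begin

text \<open>Substituting \<open>u = d s + i\<close>, \<open>v = d t + j\<close> in the sum defining
  \<open>(A *_d' B)[-d' i, -d' j]\<close> turns the index \<open>d' u - d' i\<close> of \<open>B\<close> into \<open>d d' s = s\<close>,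
  so the sum becomes \<open>\<Sum>s t. b_{s,t} a_{ds+i,dt+j} = (B *_d A)[i,j]\<close>. The substitution
  is a bijection of \<open>\<int>/e\<int>\<close> because \<open>d\<close> is a unit. For \<open>d = d' = -1\<close> the index
  change is the identity, which gives the commutativity.\<close>

lemma idx_less: "e > 0 \<Longrightarrow> idx e k < e"
  unfolding idx_def by (simp add: nat_less_iff)

lemma idx_of_nat: "s < e \<Longrightarrow> idx e (int s) = s"
  unfolding idx_def by simp

lemma idx_cong: "[k = l] (mod int e) \<Longrightarrow> idx e k = idx e l"
  unfolding idx_def cong_def by simp

lemma cong_idx: "e > 0 \<Longrightarrow> [int (idx e k) = k] (mod int e)"
  unfolding idx_def cong_def by simp

lemma idx_eq_iff_cong: "e > 0 \<Longrightarrow> idx e k = idx e l \<longleftrightarrow> [k = l] (mod int e)"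
  unfolding idx_def cong_def by (simp add: eq_nat_nat_iff)

lemma bij_betw_idx_affine:
  assumes e: "e > 0" and d: "coprime d (int e)"
  shows "bij_betw (\<lambda>s. idx e (d * int s + c)) {..<e} {..<e}"
proof -
  let ?f = "\<lambda>s. idx e (d * int s + c)"
  have inj: "inj_on ?f {..<e}"
  proof (rule inj_onI)
    fix s t assume "s \<in> {..<e}" "t \<in> {..<e}" and "?f s = ?f t"
    then have "[d * int s + c = d * int t + c] (mod int e)"
      by (simp add: idx_eq_iff_cong[OF e])
    then have "[int s = int t] (mod int e)"
      using d by (metis cong_add_rcancel cong_mult_lcancel)
    then show "s = t"
      using \<open>s \<in> {..<e}\<close> \<open>t \<in> {..<e}\<close> by (metis idx_cong idx_of_nat lessThan_iff)
  qed
  have "?f ` {..<e} \<subseteq> {..<e}" using idx_less[OF e] by blast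
  with inj have "?f ` {..<e} = {..<e}" by (simp add: endo_inj_surj)
  with inj show ?thesis by (simp add: bij_betw_def)
qed

lemma sum_idx_affine_reindex:
  fixes g :: "nat \<Rightarrow> 'a::comm_monoid_add"
  assumes "e > 0" and "coprime d (int e)"
  shows "(\<Sum>u<e. g u) = (\<Sum>s<e. g (idx e (d * int s + c)))"
  using sum.reindex_bij_betw[OF bij_betw_idx_affine[OF assms]] by (rule sym)

lemma idx_affine_inverse:
  assumes e: "e > 0" and inv: "[d * d' = 1] (mod int e)" and s: "s < e"
  shows "idx e (d' * int (idx e (d * int s + i)) + int (idx e (- (d' * i)))) = s"
proof -
  have "[d' * int (idx e (d * int s + i)) + int (idx e (- (d' * i)))
         = d' * (d * int s + i) + (- (d' * i))] (mod int e)"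
    by (intro cong_add cong_mult cong_refl cong_idx e)
  also have "d' * (d * int s + i) + (- (d' * i)) = (d * d') * int s"
    by (simp add: algebra_simps)
  also have "[(d * d') * int s = 1 * int s] (mod int e)"
    by (intro cong_mult inv cong_refl)
  finally show ?thesis
    using s by (simp add: idx_cong idx_of_nat)
qed

lemma dcomp_swap_entry:
  fixes A B :: "'a::comm_ring_1 mat"
  assumes e: "e > 0" and d: "coprime d (int e)" and inv: "[d * d' = 1] (mod int e)"
    and i: "i < e" and j: "j < e"
  shows "dcomp e d B A $$ (i,j) =
         dcomp e d' A B $$ (idx e (- d' * int i), idx e (- d' * int j))"
proof -
  let ?i = "idx e (- d' * int i)" and ?j = "idx e (- d' * int j)"
  let ?s = "\<lambda>s. idx e (d * int s + int i)" and ?t = "\<lambda>t. idx e (d * int t + int j)"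
  have "dcomp e d' A B $$ (?i, ?j) = (\<Sum>u<e. \<Sum>v<e. A $$ (u,v) *
        B $$ (idx e (d' * int u + int ?i), idx e (d' * int v + int ?j)))"
    unfolding dcomp_def using idx_less[OF e] by simp
  also have "\<dots> = (\<Sum>s<e. \<Sum>t<e. A $$ (?s s, ?t t) *
        B $$ (idx e (d' * int (?s s) + int ?i), idx e (d' * int (?t t) + int ?j)))"
    by (subst sum_idx_affine_reindex[OF e d], rule sum.cong[OF refl],
        rule sum_idx_affine_reindex[OF e d])
  also have "\<dots> = (\<Sum>s<e. \<Sum>t<e. B $$ (s,t) * A $$ (?s s, ?t t))"
    by (intro sum.cong refl)
       (simp add: idx_affine_inverse[OF e inv] mult.commute)
  also have "\<dots> = dcomp e d B A $$ (i,j)"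
    unfolding dcomp_def using i j by simp
  finally show ?thesis by simp
qed

lemma dcomp_minus_one_commute:
  fixes A B :: "'a::comm_ring_1 mat"
  assumes e: "e > 0"
  shows "dcomp e (-1) A B = dcomp e (-1) B A"
proof (rule eq_matI)
  fix i j assume "i < dim_row (dcomp e (-1) B A)" "j < dim_col (dcomp e (-1) B A)"
  then have i: "i < e" and j: "j < e" by (simp_all add: dcomp_def)
  have "[(-1) * (-1) = (1::int)] (mod int e)" by simp
  from dcomp_swap_entry[OF e _ this i j, of B A]
  show "dcomp e (-1) A B $$ (i,j) = dcomp e (-1) B A $$ (i,j)"
    using i j by (simp add: idx_of_nat)
qed (simp_all add: dcomp_def)

theorem proposition3p1:
  fixes A B :: "'a::field_char_0 mat" and e :: nat and d d' :: int
  assumes "e \<ge> 2"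
    and "A \<in> carrier_mat e e" and "B \<in> carrier_mat e e"
    and "coprime d (int e)"
    and "[d * d' = 1] (mod int e)"
  shows "(\<forall>i<e. \<forall>j<e.
            dcomp e d B A $$ (i,j) =
            dcomp e d' A B $$ (idx e (- d' * int i), idx e (- d' * int j)))
         \<and> dcomp e (-1) A B = dcomp e (-1) B A"
proof -
  have e: "e > 0" using assms(1) by simp
  show ?thesis
    using dcomp_swap_entry[OF e assms(4,5)] dcomp_minus_one_commute[OF e] by blast
qed

end
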